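(* Let $F$ be an infinite field and let $R$ be a unital $F$-algebra (not necessarily associative) with $\dim_F R<\infty$. Let $f,g,h:R\to F$ be polynomial functions with $f=g\cdot h$ and $g(1)=h(1)=1$. Then $f$ is multiplicative if and only if both $g$ and $h$ are multiplicative.
   Context: A polynomial function $R\to F$ is one given, in coordinates with respect to an $F$-basis $a_1,\dots,a_m$ of $R$, by a polynomial in $F[x_1,\dots,x_m]$. A function $\phi:R\to F$ is multiplicative if $\phi(ab)=\phi(a)\phi(b)$ for all $a,b\in R$. *)

theory Defs
  imports Main
begin

text \<open>An m-dimensional F-vector space R, identified with F^m via coordinates with respect
  to a fixed basis a_1,...,a_m (coordinates indexed 0..m-1, all further coordinates zero).\<close>
definition vecs :: "nat \<Rightarrow> (nat \<Rightarrow> 'a::zero) set" where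
  "vecs m = {x. \<forall>i\<ge>m. x i = 0}"

definition vadd :: "(nat \<Rightarrow> 'a::plus) \<Rightarrow> (nat \<Rightarrow> 'a) \<Rightarrow> (nat \<Rightarrow> 'a)" where
  "vadd x y = (\<lambda>i. x i + y i)"

definition vscale :: "'a::times \<Rightarrow> (nat \<Rightarrow> 'a) \<Rightarrow> (nat \<Rightarrow> 'a)" where
  "vscale c x = (\<lambda>i. c * x i)"

definition unital_algebra :: "nat \<Rightarrow> ((nat \<Rightarrow> 'a::field) \<Rightarrow> (nat \<Rightarrow> 'a) \<Rightarrow> (nat \<Rightarrow> 'a)) \<Rightarrow> (nat \<Rightarrow> 'a) \<Rightarrow> bool" where
  "unital_algebra m mul e \<longleftrightarrow>
     (\<forall>x\<in>vecs m. \<forall>y\<in>vecs m. mul x y \<in> vecs m) \<and>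
     e \<in> vecs m \<and>
     (\<forall>x\<in>vecs m. mul e x = x \<and> mul x e = x) \<and>
     (\<forall>x\<in>vecs m. \<forall>y\<in>vecs m. \<forall>z\<in>vecs m.
        mul (vadd x y) z = vadd (mul x z) (mul y z) \<and>
        mul x (vadd y z) = vadd (mul x y) (mul x z)) \<and>
     (\<forall>c. \<forall>x\<in>vecs m. \<forall>y\<in>vecs m.
        mul (vscale c x) y = vscale c (mul x y) \<and>
        mul x (vscale c y) = vscale c (mul x y))"

inductive_set poly_funs :: "nat \<Rightarrow> ((nat \<Rightarrow> 'a::comm_ring_1) \<Rightarrow> 'a) set" for m where
  const: "(\<lambda>x. c) \<in> poly_funs m"
| coord: "i < m \<Longrightarrow> (\<lambda>x. x i) \<in> poly_funs m"
| add: "p \<in> poly_funs m \<Longrightarrow> q \<in> poly_funs m \<Longrightarrow> (\<lambda>x. p x + q x) \<in> poly_funs m"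
| mult: "p \<in> poly_funs m \<Longrightarrow> q \<in> poly_funs m \<Longrightarrow> (\<lambda>x. p x * q x) \<in> poly_funs m"

definition polynomial_function :: "nat \<Rightarrow> ((nat \<Rightarrow> 'a::comm_ring_1) \<Rightarrow> 'a) \<Rightarrow> bool" where
  "polynomial_function m f \<longleftrightarrow> (\<exists>p\<in>poly_funs m. \<forall>x\<in>vecs m. f x = p x)"

definition multiplicative :: "nat \<Rightarrow> ((nat \<Rightarrow> 'a::field) \<Rightarrow> (nat \<Rightarrow> 'a) \<Rightarrow> (nat \<Rightarrow> 'a)) \<Rightarrow> ((nat \<Rightarrow> 'a) \<Rightarrow> 'a) \<Rightarrow> bool" where
  "multiplicative m mul \<phi> \<longleftrightarrow> (\<forall>a\<in>vecs m. \<forall>b\<in>vecs m. \<phi> (mul a b) = \<phi> a * \<phi> b)"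

end

(* Given a, b in R, restrict everything to the surface X(t, s) = x(t) y(s), where x(t) and y(s)
   run along the lines from 1 to a and from 1 to b. By bilinearity X is polynomial in (t, s), so
   G = g o X and H = h o X are bivariate polynomials, and multiplicativity of f gives
   G(t, s) H(t, s) = A(t) B(s) with A(t) = f(x(t)), B(s) = f(y(s)). For each of the infinitely
   many s with B(s) <> 0, G(-, s) divides A; since a nonzero polynomial has only finitely many
   monic divisors, G(-, s) is a multiple of one fixed monic D for infinitely many s, and comparing
   coefficients yields G(t, s) = D(t) L(s). Evaluating at the corners of the unit square gives
   g(ab) g(1) = g(a) g(b). *)

theory Submission
  imports Defs "HOL-Computational_Algebra.Polynomial"
begin

lemma euclidean_ring_common_divisor_lincomb:
  fixes a b :: "'a::euclidean_ring"
  shows "\<exists>u v. u * a + v * b dvd a \<and> u * a + v * b dvd b"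
proof (induction "euclidean_size b" arbitrary: a b rule: less_induct)
  case less
  show ?case
  proof (cases "b = 0")
    case True
    then show ?thesis by (intro exI[of _ 1] exI[of _ 0]) simp
  next
    case False
    then obtain u v where uv: "u * b + v * (a mod b) dvd b" "u * b + v * (a mod b) dvd a mod b"
      using less mod_size_less by blast
    have lincomb: "u * b + v * (a mod b) = v * a + (u - v * (a div b)) * b"
      by (simp add: minus_div_mult_eq_mod [symmetric] algebra_simps)
    have "u * b + v * (a mod b) dvd a"
      using uv by (metis div_mult_mod_eq dvd_add dvd_mult)
    with uv(1) show ?thesis
      unfolding lincomb by blast
  qed
qed

lemma irreducible_imp_prime_elem_euclidean:
  fixes p :: "'a::euclidean_ring"
  assumes "irreducible p"
  shows "prime_elem p"
proof (rule prime_elemI)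
  show "p \<noteq> 0" and "\<not> is_unit p"
    using assms by (auto simp: irreducible_def)
next
  fix a b assume "p dvd a * b"
  obtain u v where uv: "u * p + v * a dvd p" "u * p + v * a dvd a"
    using euclidean_ring_common_divisor_lincomb by blast
  from irreducibleD'[OF assms uv(1)] show "p dvd a \<or> p dvd b"
  proof
    assume "p dvd u * p + v * a"
    then show ?thesis using uv(2) dvd_trans by blast
  next
    assume unit: "is_unit (u * p + v * a)"
    have "(u * p + v * a) * b = p * (u * b) + v * (a * b)"
      by (simp add: algebra_simps)
    then have "p dvd (u * p + v * a) * b"
      using \<open>p dvd a * b\<close> by simp
    then show ?thesis
      using unit by (simp add: dvd_mult_unit_iff')
  qed
qed

lemma dvd_prime_elem_mult_cases:
  fixes p d q :: "'a::idom"
  assumes "prime_elem p" and "d dvd p * q"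
  shows "p dvd d \<or> d dvd q"
proof -
  obtain r where r: "p * q = d * r"
    using assms(2) by (elim dvdE)
  then have "p dvd d \<or> p dvd r"
    using assms(1) prime_elem_dvd_mult_iff by (metis dvd_triv_left)
  moreover have "d dvd q" if pr: "p dvd r"
  proof -
    obtain r' where "r = p * r'" using pr by (elim dvdE)
    then have "q = d * r'"
      using r prime_elem_not_zeroI[OF assms(1)] by (simp add: algebra_simps)
    then show ?thesis by simp
  qed
  ultimately show ?thesis by blast
qed

lemma exists_irreducible_divisor_poly:
  fixes A :: "'a::field poly"
  assumes "degree A > 0"
  shows "\<exists>P. irreducible P \<and> P dvd A"
  using assms
proof (induction "degree A" arbitrary: A rule: less_induct)
  case less
  show ?case
  proof (cases "irreducible A")
    case False
    have "A \<noteq> 0"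
      using less.prems by auto
    with less.prems have "\<not> is_unit A"
      by (simp add: is_unit_iff_degree)
    with False \<open>A \<noteq> 0\<close> obtain a b where ab: "A = a * b" "\<not> is_unit a" "\<not> is_unit b"
      by (auto simp: irreducible_def)
    with \<open>A \<noteq> 0\<close> have "a \<noteq> 0" "b \<noteq> 0" by auto
    with ab have "degree a > 0" "degree b > 0"
      by (auto simp: is_unit_iff_degree)
    with ab \<open>a \<noteq> 0\<close> \<open>b \<noteq> 0\<close> have "degree a < degree A"
      by (simp add: degree_mult_eq)
    with less.hyps \<open>degree a > 0\<close> obtain P where "irreducible P" "P dvd a"
      by blast
    then show ?thesis
      using ab(1) by auto
  qed auto
qed

lemma exists_monic_prime_divisor_poly:
  fixes A :: "'a::field poly"
  assumes "degree A > 0"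
  shows "\<exists>P. prime_elem P \<and> lead_coeff P = 1 \<and> P dvd A"
proof -
  obtain P where P: "irreducible P" "P dvd A"
    using exists_irreducible_divisor_poly[OF assms] by blast
  define c where "c = inverse (lead_coeff P)"
  have "P \<noteq> 0" using P(1) by auto
  then have "c \<noteq> 0" by (simp add: c_def)
  then have "irreducible ([:c:] * P)"
    using P(1) irreducible_mult_unit_left is_unit_triv by blast
  moreover have "lead_coeff ([:c:] * P) = 1"
    using \<open>P \<noteq> 0\<close> by (simp add: c_def)
  moreover have "[:c:] * P dvd A"
    using P(2) \<open>c \<noteq> 0\<close> by (simp add: smult_dvd)
  ultimately show ?thesis
    using irreducible_imp_prime_elem_euclidean by blast
qed

lemma finite_monic_divisors_poly:
  fixes A :: "'a::field poly"
  assumes "A \<noteq> 0"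
  shows "finite {D. D dvd A \<and> lead_coeff D = 1}"
  using assms
proof (induction "degree A" arbitrary: A rule: less_induct)
  case less
  show ?case
  proof (cases "degree A = 0")
    case True
    have "{D. D dvd A \<and> lead_coeff D = 1} \<subseteq> {1}"
    proof safe
      fix D assume D: "D dvd A" "lead_coeff D = 1"
      then have "degree D = 0"
        using dvd_imp_degree_le[of D A] less.prems True by simp
      then show "D = 1"
        using D(2) by (auto elim: degree_eq_zeroE)
    qed
    then show ?thesis
      using finite_subset by blast
  next
    case False
    then obtain P where P: "prime_elem P" "lead_coeff P = 1" "P dvd A"
      using exists_monic_prime_divisor_poly by blast
    then obtain Q where A: "A = P * Q"
      by (elim dvdE)
    with less.prems have "Q \<noteq> 0" by auto
    have "degree P > 0"
      using P(1) prime_elem_not_unit is_unit_iff_degree prime_elem_not_zeroI by blast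
    with A \<open>Q \<noteq> 0\<close> less.prems have "degree Q < degree A"
      by (simp add: degree_mult_eq)
    with less.hyps \<open>Q \<noteq> 0\<close> have fin: "finite {D. D dvd Q \<and> lead_coeff D = 1}"
      by blast
    have "{D. D dvd A \<and> lead_coeff D = 1} \<subseteq>
        {D. D dvd Q \<and> lead_coeff D = 1} \<union> (*) P ` {D. D dvd Q \<and> lead_coeff D = 1}"
    proof safe
      fix D assume D: "D dvd A" "lead_coeff D = 1" "D \<notin> (*) P ` {D. D dvd Q \<and> lead_coeff D = 1}"
      have "P dvd D \<or> D dvd Q"
        using dvd_prime_elem_mult_cases[OF P(1)] D(1) A by blast
      moreover have "\<not> P dvd D"
      proof
        assume "P dvd D"
        then obtain D' where D': "D = P * D'" by (elim dvdE)
        then have "D' dvd Q"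
          using D(1) A P(1) prime_elem_not_zeroI by fastforce
        moreover have "lead_coeff D' = 1"
          using D(2) P(2) D' by (simp add: lead_coeff_mult)
        ultimately show False
          using D(3) D' by blast
      qed
      ultimately show "D dvd Q" by blast
    qed
    then show ?thesis
      using fin finite_subset by blast
  qed
qed

lemma poly_eqI_infinite:
  fixes p q :: "'a::field poly"
  assumes "infinite S" and "\<And>x. x \<in> S \<Longrightarrow> poly p x = poly q x"
  shows "p = q"
proof (rule ccontr)
  assume "p \<noteq> q"
  then have "finite {x. poly (p - q) x = 0}"
    by (intro poly_roots_finite) simp
  moreover have "S \<subseteq> {x. poly (p - q) x = 0}"
    using assms(2) by auto
  ultimately show False
    using assms(1) finite_subset by blast
qed

lemma infinite_subset_proportional_to_monic_divisor:
  fixes A :: "'a::field poly" and P :: "'b \<Rightarrow> 'a poly"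
  assumes "infinite S" and "A \<noteq> 0" and "\<And>y. y \<in> S \<Longrightarrow> P y \<noteq> 0 \<and> P y dvd A"
  shows "\<exists>D T. T \<subseteq> S \<and> infinite T \<and> lead_coeff D = 1 \<and>
           (\<forall>y\<in>T. P y = smult (lead_coeff (P y)) D)"
proof -
  define N where "N y = smult (inverse (lead_coeff (P y))) (P y)" for y
  have "N ` S \<subseteq> {D. D dvd A \<and> lead_coeff D = 1}"
    using assms(3) by (auto simp: N_def smult_dvd_iff)
  then have "finite (N ` S)"
    using finite_monic_divisors_poly[OF assms(2)] finite_subset by blast
  from pigeonhole_infinite[OF assms(1) this] obtain y1
    where "y1 \<in> S" and T: "infinite {y \<in> S. N y = N y1}" by blast
  have "lead_coeff (N y1) = 1"
    using assms(3)[OF \<open>y1 \<in> S\<close>] by (simp add: N_def)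
  moreover have "P y = smult (lead_coeff (P y)) (N y)" if "y \<in> S" for y
    using assms(3)[OF that] by (simp add: N_def)
  ultimately show ?thesis
    using T by (intro exI[of _ "N y1"] exI[of _ "{y \<in> S. N y = N y1}"]) (auto, metis)
qed

text \<open>A bivariate polynomial is a polynomial in \<open>x\<close> whose coefficients are polynomials in \<open>y\<close>.\<close>

definition poly2 :: "'a::comm_semiring_1 poly poly \<Rightarrow> 'a \<Rightarrow> 'a \<Rightarrow> 'a" where
  "poly2 P x y = poly (poly P [:x:]) y"

lemma poly2_conv_map_poly: "poly2 P x y = poly (map_poly (\<lambda>q. poly q y) P) x"
  unfolding poly2_def by (induction P) (auto simp: map_poly_pCons)

lemma poly2_0_left: "poly2 P 0 y = poly (coeff P 0) y"
  by (simp add: poly2_def poly_0_coeff_0)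

definition bivariate_polynomial :: "('a::comm_semiring_1 \<Rightarrow> 'a \<Rightarrow> 'a) \<Rightarrow> bool" where
  "bivariate_polynomial \<phi> \<longleftrightarrow> (\<exists>P. \<forall>x y. \<phi> x y = poly2 P x y)"

lemma bivariate_polynomial_const: "bivariate_polynomial (\<lambda>x y. c)"
  unfolding bivariate_polynomial_def by (intro exI[of _ "[:[:c:]:]"]) (simp add: poly2_def)

lemma bivariate_polynomial_fst: "bivariate_polynomial (\<lambda>x y. x)"
  unfolding bivariate_polynomial_def by (intro exI[of _ "[:0, 1:]"]) (simp add: poly2_def)

lemma bivariate_polynomial_snd: "bivariate_polynomial (\<lambda>x y. y)"
  unfolding bivariate_polynomial_def by (intro exI[of _ "[:[:0, 1:]:]"]) (simp add: poly2_def)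

lemma bivariate_polynomial_add:
  "bivariate_polynomial \<phi> \<Longrightarrow> bivariate_polynomial \<psi> \<Longrightarrow> bivariate_polynomial (\<lambda>x y. \<phi> x y + \<psi> x y)"
  unfolding bivariate_polynomial_def by (metis (no_types) poly2_def poly_add)

lemma bivariate_polynomial_diff:
  fixes \<phi> \<psi> :: "'a::comm_ring_1 \<Rightarrow> 'a \<Rightarrow> 'a"
  shows "bivariate_polynomial \<phi> \<Longrightarrow> bivariate_polynomial \<psi> \<Longrightarrow> bivariate_polynomial (\<lambda>x y. \<phi> x y - \<psi> x y)"
  unfolding bivariate_polynomial_def by (metis (no_types) poly2_def poly_diff)

lemma bivariate_polynomial_mult:
  "bivariate_polynomial \<phi> \<Longrightarrow> bivariate_polynomial \<psi> \<Longrightarrow> bivariate_polynomial (\<lambda>x y. \<phi> x y * \<psi> x y)"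
  unfolding bivariate_polynomial_def by (metis (no_types) poly2_def poly_mult)

lemma bivariate_polynomial_comp_polynomial_function:
  assumes "polynomial_function m f" and "\<And>x y. \<Phi> x y \<in> vecs m"
    and "\<And>i. i < m \<Longrightarrow> bivariate_polynomial (\<lambda>x y. \<Phi> x y i)"
  shows "bivariate_polynomial (\<lambda>x y. f (\<Phi> x y))"
proof -
  obtain p where p: "p \<in> poly_funs m" "\<forall>v\<in>vecs m. f v = p v"
    using assms(1) unfolding polynomial_function_def by blast
  from p(1) have "bivariate_polynomial (\<lambda>x y. p (\<Phi> x y))"
    by induction
      (use assms(3) in \<open>auto intro: bivariate_polynomial_const bivariate_polynomial_add
                                      bivariate_polynomial_mult\<close>)
  then show ?thesis
    using p(2) assms(2) by simp
qed

lemma poly2_separated_if_specializations_proportional: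
  fixes G :: "'a::field poly poly"
  assumes "infinite T" and "lead_coeff D = 1"
    and "\<And>y. y \<in> T \<Longrightarrow> \<exists>c. map_poly (\<lambda>q. poly q y) G = smult c D"
  shows "\<exists>L. \<forall>x y. poly2 G x y = poly D x * poly L y"
proof -
  define L where "L = coeff G (degree D)"
  have "poly (coeff G k) y = poly (smult (coeff D k) L) y" if yT: "y \<in> T" for y k
  proof -
    obtain c where c: "map_poly (\<lambda>q. poly q y) G = smult c D"
      using assms(3)[OF yT] by blast
    have "poly (coeff G j) y = c * coeff D j" for j
      using arg_cong[OF c, of "\<lambda>p. coeff p j"] by (simp add: coeff_map_poly)
    from this[of "degree D"] this[of k] show ?thesis
      using assms(2) by (simp add: L_def)
  qed
  then have "coeff G k = smult (coeff D k) L" for k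
    by (intro poly_eqI_infinite[OF assms(1)])
  then have "map_poly (\<lambda>q. poly q y) G = smult (poly L y) D" for y
    by (intro poly_eqI) (simp add: coeff_map_poly)
  then show ?thesis
    by (auto simp: poly2_conv_map_poly)
qed

lemma poly2_separated_if_product_separated:
  fixes G H :: "'a::field poly poly"
  assumes "infinite (UNIV :: 'a set)" and "A \<noteq> 0" and "B \<noteq> 0"
    and prod: "\<And>x y. poly2 G x y * poly2 H x y = poly A x * poly B y"
  shows "\<exists>D L. \<forall>x y. poly2 G x y = poly D x * poly L y"
proof -
  define S where "S = {y. poly B y \<noteq> 0}"
  have "UNIV = S \<union> {y. poly B y = 0}"
    by (auto simp: S_def)
  then have "infinite S"
    using assms(1) poly_roots_finite[OF assms(3)] by (metis finite_Un)
  define spec where "spec P y = map_poly (\<lambda>q. poly q y) P" for P :: "'a poly poly" and y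
  have spec_prod: "spec G y * spec H y = smult (poly B y) A" for y
    by (rule poly_eqI_infinite[OF assms(1)]) (simp add: spec_def prod flip: poly2_conv_map_poly)
  have "spec G y \<noteq> 0 \<and> spec G y dvd A" if "y \<in> S" for y
  proof -
    have "A = spec G y * smult (inverse (poly B y)) (spec H y)"
      using spec_prod[of y] that by (simp add: S_def mult_smult_right)
    then show ?thesis
      using assms(2) by (metis dvdI mult_zero_left)
  qed
  then obtain D T where T: "infinite T" "lead_coeff D = 1"
      and D: "\<forall>y\<in>T. spec G y = smult (lead_coeff (spec G y)) D"
    using infinite_subset_proportional_to_monic_divisor[of S A "spec G"] \<open>infinite S\<close> assms(2)
    by auto
  have "\<exists>L. \<forall>x y. poly2 G x y = poly D x * poly L y"
  proof (rule poly2_separated_if_specializations_proportional[OF T])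
    show "\<exists>c. map_poly (\<lambda>q. poly q y) G = smult c D" if "y \<in> T" for y
      using D that unfolding spec_def by blast
  qed
  then show ?thesis by blast
qed

lemma poly2_factor_splits_along_axes:
  fixes G H P :: "'a::field poly poly"
  assumes "infinite (UNIV :: 'a set)" and "poly2 P 0 0 \<noteq> 0"
    and prod: "\<And>x y. poly2 G x y * poly2 H x y = poly2 P x 0 * poly2 P 0 y"
  shows "poly2 G x y * poly2 G 0 0 = poly2 G x 0 * poly2 G 0 y"
proof -
  have "map_poly (\<lambda>q. poly q 0) P \<noteq> 0"
    using assms(2) by (auto simp: poly2_conv_map_poly)
  moreover have "coeff P 0 \<noteq> 0"
    using assms(2) by (auto simp: poly2_0_left)
  ultimately obtain D L where "\<forall>x y. poly2 G x y = poly D x * poly L y"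
    using poly2_separated_if_product_separated[OF assms(1)] prod
    by (metis poly2_0_left poly2_conv_map_poly)
  then show ?thesis
    by (simp add: algebra_simps)
qed

lemma vadd_vecs: "x \<in> vecs m \<Longrightarrow> y \<in> vecs m \<Longrightarrow> vadd x y \<in> vecs m"
  for x y :: "nat \<Rightarrow> 'a::monoid_add"
  by (simp add: vecs_def vadd_def)

lemma vscale_vecs: "x \<in> vecs m \<Longrightarrow> vscale c x \<in> vecs m"
  for x :: "nat \<Rightarrow> 'a::mult_zero"
  by (simp add: vecs_def vscale_def)

definition line_through :: "(nat \<Rightarrow> 'a::ring_1) \<Rightarrow> (nat \<Rightarrow> 'a) \<Rightarrow> 'a \<Rightarrow> (nat \<Rightarrow> 'a)" where
  "line_through u v t = vadd (vscale (1 - t) u) (vscale t v)"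

lemma line_through_apply: "line_through u v t i = (1 - t) * u i + t * v i"
  by (simp add: line_through_def vadd_def vscale_def)

lemma line_through_0 [simp]: "line_through u v 0 = u"
  and line_through_1 [simp]: "line_through u v 1 = v"
  by (simp_all add: fun_eq_iff line_through_apply)

lemma line_through_vecs: "u \<in> vecs m \<Longrightarrow> v \<in> vecs m \<Longrightarrow> line_through u v t \<in> vecs m"
  unfolding line_through_def by (intro vadd_vecs vscale_vecs)

lemma unital_algebra_mul_vecs:
  "unital_algebra m mul e \<Longrightarrow> x \<in> vecs m \<Longrightarrow> y \<in> vecs m \<Longrightarrow> mul x y \<in> vecs m"
  unfolding unital_algebra_def by blast

lemma unital_algebra_unit:
  assumes "unital_algebra m mul e"
  shows "e \<in> vecs m" and "x \<in> vecs m \<Longrightarrow> mul e x = x" and "x \<in> vecs m \<Longrightarrow> mul x e = x"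
  using assms unfolding unital_algebra_def by blast+

lemma unital_algebra_mul_line_through_left:
  assumes "unital_algebra m mul e" and "u \<in> vecs m" "v \<in> vecs m" "z \<in> vecs m"
  shows "mul (line_through u v t) z = line_through (mul u z) (mul v z) t"
proof -
  have "mul (line_through u v t) z = vadd (mul (vscale (1 - t) u) z) (mul (vscale t v) z)"
    using assms vscale_vecs unfolding unital_algebra_def line_through_def by blast
  also have "\<dots> = line_through (mul u z) (mul v z) t"
    using assms unfolding unital_algebra_def line_through_def by simp
  finally show ?thesis .
qed

lemma unital_algebra_mul_line_through_right:
  assumes "unital_algebra m mul e" and "u \<in> vecs m" "v \<in> vecs m" "z \<in> vecs m"
  shows "mul z (line_through u v t) = line_through (mul z u) (mul z v) t"
proof -
  have "mul z (line_through u v t) = vadd (mul z (vscale (1 - t) u)) (mul z (vscale t v))"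
    using assms vscale_vecs unfolding unital_algebra_def line_through_def by blast
  also have "\<dots> = line_through (mul z u) (mul z v) t"
    using assms unfolding unital_algebra_def line_through_def by simp
  finally show ?thesis .
qed

lemma unital_algebra_mul_lines_through_unit:
  assumes alg: "unital_algebra m mul e" and "a \<in> vecs m" "b \<in> vecs m"
  shows "mul (line_through e a t) (line_through e b s) =
           line_through (line_through e b s) (line_through a (mul a b) s) t"
proof -
  have "e \<in> vecs m"
    using alg by (rule unital_algebra_unit)
  with assms show ?thesis
    by (simp add: unital_algebra_mul_line_through_left unital_algebra_mul_line_through_right
        line_through_vecs unital_algebra_unit)
qed

lemma polynomial_function_on_product_of_lines:
  fixes k :: "(nat \<Rightarrow> 'a::field) \<Rightarrow> 'a"
  assumes alg: "unital_algebra m mul e" and "a \<in> vecs m" "b \<in> vecs m"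
    and "polynomial_function m k"
  shows "\<exists>K. \<forall>t s. k (mul (line_through e a t) (line_through e b s)) = poly2 K t s"
proof -
  have e: "e \<in> vecs m"
    using alg by (rule unital_algebra_unit)
  have "bivariate_polynomial (\<lambda>t s. mul (line_through e a t) (line_through e b s) i)" for i
    unfolding unital_algebra_mul_lines_through_unit[OF assms(1-3)] line_through_apply
    by (intro bivariate_polynomial_add bivariate_polynomial_diff bivariate_polynomial_mult
        bivariate_polynomial_const bivariate_polynomial_fst bivariate_polynomial_snd)
  moreover have "mul (line_through e a t) (line_through e b s) \<in> vecs m" for t s
    using assms e by (intro unital_algebra_mul_vecs[OF alg] line_through_vecs)
  ultimately have "bivariate_polynomial (\<lambda>t s. k (mul (line_through e a t) (line_through e b s)))"
    by (intro bivariate_polynomial_comp_polynomial_function[OF assms(4)])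
  then show ?thesis
    unfolding bivariate_polynomial_def .
qed

lemma multiplicative_product:
  assumes "\<And>x y. x \<in> vecs m \<Longrightarrow> y \<in> vecs m \<Longrightarrow> mul x y \<in> vecs m"
    and "\<forall>x\<in>vecs m. f x = g x * h x"
    and "multiplicative m mul g" and "multiplicative m mul h"
  shows "multiplicative m mul f"
  using assms unfolding multiplicative_def by (simp add: algebra_simps)

lemma multiplicative_factor_of_multiplicative_product:
  fixes mul :: "(nat \<Rightarrow> 'a::field) \<Rightarrow> (nat \<Rightarrow> 'a) \<Rightarrow> (nat \<Rightarrow> 'a)"
  assumes inf: "infinite (UNIV :: 'a set)" and alg: "unital_algebra m mul e"
    and "polynomial_function m f" "polynomial_function m g" "polynomial_function m h"
    and fgh: "\<forall>x\<in>vecs m. f x = g x * h x" and "g e = 1" and "h e = 1"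
    and mult_f: "multiplicative m mul f"
  shows "multiplicative m mul g"
  unfolding multiplicative_def
proof (intro ballI)
  fix a b :: "nat \<Rightarrow> 'a" assume a: "a \<in> vecs m" and b: "b \<in> vecs m"
  define X where "X t s = mul (line_through e a t) (line_through e b s)" for t s
  have e: "e \<in> vecs m"
    using alg by (rule unital_algebra_unit)
  have X_vecs: "X t s \<in> vecs m" for t s
    unfolding X_def using a b e by (intro unital_algebra_mul_vecs[OF alg] line_through_vecs)
  have X_axes: "X t 0 = line_through e a t" "X 0 s = line_through e b s" for t s
    unfolding X_def using a b e by (simp_all add: unital_algebra_unit[OF alg] line_through_vecs)
  obtain P where P: "\<And>t s. f (X t s) = poly2 P t s"
    using polynomial_function_on_product_of_lines[OF alg a b assms(3)] unfolding X_def by blast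
  obtain G where G: "\<And>t s. g (X t s) = poly2 G t s"
    using polynomial_function_on_product_of_lines[OF alg a b assms(4)] unfolding X_def by blast
  obtain H where H: "\<And>t s. h (X t s) = poly2 H t s"
    using polynomial_function_on_product_of_lines[OF alg a b assms(5)] unfolding X_def by blast
  have X_corners: "X 1 1 = mul a b" "X 1 0 = a" "X 0 1 = b" "X 0 0 = e"
    using X_axes(1)[of 1] X_axes(2)[of 1] X_axes(1)[of 0] by (simp_all add: X_def)
  have "poly2 P 0 0 \<noteq> 0"
    using fgh e \<open>g e = 1\<close> \<open>h e = 1\<close> by (simp flip: P add: X_corners)
  moreover have "poly2 G t s * poly2 H t s = poly2 P t 0 * poly2 P 0 s" for t s
  proof -
    have "poly2 G t s * poly2 H t s = f (X t s)"
      using fgh X_vecs by (simp flip: G H)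
    also have "\<dots> = f (line_through e a t) * f (line_through e b s)"
      using mult_f line_through_vecs[OF e a] line_through_vecs[OF e b]
      unfolding multiplicative_def X_def by blast
    also have "\<dots> = poly2 P t 0 * poly2 P 0 s"
      by (simp flip: P add: X_axes)
    finally show ?thesis .
  qed
  ultimately have "poly2 G 1 1 * poly2 G 0 0 = poly2 G 1 0 * poly2 G 0 1"
    by (rule poly2_factor_splits_along_axes[OF inf])
  then show "g (mul a b) = g a * g b"
    using \<open>g e = 1\<close> by (simp flip: G add: X_corners)
qed

theorem proposition2p4:
  fixes m :: nat
    and mul :: "(nat \<Rightarrow> 'a::field) \<Rightarrow> (nat \<Rightarrow> 'a) \<Rightarrow> (nat \<Rightarrow> 'a)"
    and e :: "nat \<Rightarrow> 'a"
    and f g h :: "(nat \<Rightarrow> 'a) \<Rightarrow> 'a"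
  assumes "infinite (UNIV :: 'a set)"
    and "unital_algebra m mul e"
    and "polynomial_function m f" and "polynomial_function m g" and "polynomial_function m h"
    and "\<forall>x\<in>vecs m. f x = g x * h x"
    and "g e = 1" and "h e = 1"
  shows "multiplicative m mul f \<longleftrightarrow> multiplicative m mul g \<and> multiplicative m mul h"
proof
  assume mult_f: "multiplicative m mul f"
  have "\<forall>x\<in>vecs m. f x = h x * g x"
    using assms(6) by (simp add: mult.commute)
  then show "multiplicative m mul g \<and> multiplicative m mul h"
    using multiplicative_factor_of_multiplicative_product[OF assms(1-8) mult_f]
      multiplicative_factor_of_multiplicative_product[OF assms(1,2,3,5,4) _ assms(8,7) mult_f]
    by blast
next
  assume "multiplicative m mul g \<and> multiplicative m mul h"
  then show "multiplicative m mul f"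
    using multiplicative_product[of m mul f g h] unital_algebra_mul_vecs[OF assms(2)] assms(6)
    by blast
qed

end
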